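(* Consider the $(1,\lambda)$-CSA-ES without cumulation (i.e. $c=1$), with any $\lambda\ge1$ and $d_\sigma>0$, applied to $f(x)=[x]_1$ on $\mathbb{R}^n$. Let $\Delta_\sigma:=\frac{1}{2d_\sigma n}\big(\mathbb{E}(\mathcal{N}_{1:\lambda}^2)-1\big)$. Then (i) almost surely $\lim_{t\to\infty}\frac1t\ln(\sigma_t/\sigma_0)=\Delta_\sigma$, and (ii) for all $t\in\mathbb{N}$, $\mathbb{E}\big(\ln(\sigma_{t+1}/\sigma_t)\big)=\Delta_\sigma$.
   Context: For $x\in\mathbb{R}^n$, $[x]_i$ denotes its $i$-th coordinate. The $(1,\lambda)$-CSA-ES with parameters $\lambda\ge1$, $0<c\le1$, $d_\sigma>0$, minimizing $f:\mathbb{R}^n\to\mathbb{R}$, is defined as follows. Start from $X_0\in\mathbb{R}^n$, $\sigma_0>0$, and $p_0\sim\mathcal{N}(0,I_n)$. At iteration $t$, draw $\xi_{t,1},\ldots,\xi_{t,\lambda}$ i.i.d. $\sim\mathcal{N}(0,I_n)$, independent of everything before; the children are $Y_{t,i}=X_t+\sigma_t\xi_{t,i}$. The next parent $X_{t+1}$ is the child with the smallest $f$-value, and $\xi^\star_t$ denotes the corresponding $\xi_{t,i}$, so that $X_{t+1}=X_t+\sigma_t\xi^\star_t$. The cumulative path is $p_{t+1}=(1-c)p_t+\sqrt{c(2-c)}\,\xi^\star_t$, and the step-size is updated as $\sigma_{t+1}=\sigma_t\exp\!\big(\tfrac{c}{2d_\sigma}(\|p_{t+1}\|^2/n-1)\big)$.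 For i.i.d. standard normal $\mathcal{N}_1,\ldots,\mathcal{N}_\lambda$, $\mathcal{N}_{1:\lambda}$ denotes their minimum (first order statistic). *)

theory Defs
  imports "HOL-Probability.Probability"
begin

text \<open>Vectors of R^n are represented as functions nat => real, coordinates 0..n-1;
  the paper's first coordinate [x]_1 is coordinate 0.
  Noise: xi t i j is the j-th coordinate of xi_{t,i} (child i < lam at iteration t).\<close>

text \<open>Index of the selected child: the child with the smallest f-value
  (ties, a null event, broken by the smallest index).\<close>
definition selected :: "nat \<Rightarrow> ((nat \<Rightarrow> real) \<Rightarrow> real) \<Rightarrow> (nat \<Rightarrow> nat \<Rightarrow> real) \<Rightarrow> nat" where
  "selected lam f Y = (LEAST i. i < lam \<and> (\<forall>k<lam. f (Y i) \<le> f (Y k)))"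

fun csa_es :: "nat \<Rightarrow> nat \<Rightarrow> real \<Rightarrow> real \<Rightarrow> ((nat \<Rightarrow> real) \<Rightarrow> real)
    \<Rightarrow> (nat \<Rightarrow> real) \<Rightarrow> real \<Rightarrow> (nat \<Rightarrow> real) \<Rightarrow> (nat \<Rightarrow> nat \<Rightarrow> nat \<Rightarrow> real)
    \<Rightarrow> nat \<Rightarrow> (nat \<Rightarrow> real) \<times> real \<times> (nat \<Rightarrow> real)" where
  "csa_es n lam c d f X0 s0 p0 xi 0 = (X0, s0, p0)"
| "csa_es n lam c d f X0 s0 p0 xi (Suc t) =
     (case csa_es n lam c d f X0 s0 p0 xi t of (X, s, p) \<Rightarrow>
        let Y = (\<lambda>i j. X j + s * xi t i j);
            istar = selected lam f Y;
            xs = xi t istar;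
            p' = (\<lambda>j. (1 - c) * p j + sqrt (c * (2 - c)) * xs j);
            s' = s * exp (c / (2 * d) * ((\<Sum>j<n. (p' j)\<^sup>2) / real n - 1))
        in (\<lambda>j. X j + s * xs j, s', p'))"

definition std_normal_measure :: "real measure" where
  "std_normal_measure = density lborel (\<lambda>x. ennreal (std_normal_density x))"

definition min_normal_second_moment :: "nat \<Rightarrow> real" where
  "min_normal_second_moment lam =
     integral\<^sup>L (PiM {..<lam} (\<lambda>_. std_normal_measure)) (\<lambda>x. (Min (x ` {..<lam}))\<^sup>2)"

end

theory Submission
  imports Defs
begin

text \<open>With c = 1 the path p_{t+1} is the selected step \<xi>*_t itself, so
  ln(\<sigma>_{t+1}/\<sigma>_t) = (|\<xi>*_t|^2/n - 1)/(2 d_\<sigma>) depends on the noise of iteration t only: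
  the increments of ln \<sigma>_t are independent, and ln(\<sigma>_t/\<sigma>_0) is their partial sum.
  On the linear function the children are ranked by their first coordinates, so the first
  coordinate of \<xi>*_t is the minimum N_{1:\<lambda>}, whereas every other coordinate of \<xi>*_t is
  independent of which child wins and hence still has second moment 1. This gives
  E |\<xi>*_t|^2 = E N_{1:\<lambda>}^2 + n - 1, i.e. (ii). As |\<xi>*_t|^2 is dominated by the sum of
  all \<lambda> n squared noise entries, the increments have bounded fourth moments, and the
  fourth-moment strong law of large numbers (Markov's inequality and Borel-Cantelli) gives (i).\<close>

section \<open>Moment inequalities\<close>

lemma power4_add_le: "((a::real) + b) ^ 4 \<le> 8 * (a ^ 4 + b ^ 4)"
proof -
  have sq: "(x + y)\<^sup>2 \<le> 2 * (x\<^sup>2 + y\<^sup>2)" for x y :: real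
    using zero_le_power2[of "x - y"] by (simp add: power2_eq_square algebra_simps)
  have "(a + b) ^ 4 = ((a + b)\<^sup>2)\<^sup>2" by simp
  also have "\<dots> \<le> (2 * (a\<^sup>2 + b\<^sup>2))\<^sup>2" using sq[of a b] by (intro power_mono) auto
  also have "\<dots> \<le> 8 * (a ^ 4 + b ^ 4)" using sq[of "a\<^sup>2" "b\<^sup>2"]
    by (simp add: power2_eq_square power4_eq_xxxx algebra_simps)
  finally show ?thesis .
qed

lemma sum_squares_power4_le:
  fixes f :: "'i \<Rightarrow> real"
  shows "(\<Sum>x\<in>S. (f x)\<^sup>2) ^ 4 \<le> real (card S) ^ 3 * (\<Sum>x\<in>S. f x ^ 8)"
proof -
  have sq4: "(\<Sum>x\<in>S. (f x)\<^sup>2)\<^sup>2 \<le> (\<Sum>x\<in>S. f x ^ 4) * card S"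
    using sum_squared_le_sum_of_squares[of "\<lambda>x. (f x)\<^sup>2" S] by (simp add: power_mult[symmetric])
  have sq8: "(\<Sum>x\<in>S. f x ^ 4)\<^sup>2 \<le> (\<Sum>x\<in>S. f x ^ 8) * card S"
    using sum_squared_le_sum_of_squares[of "\<lambda>x. f x ^ 4" S] by (simp add: power_mult[symmetric])
  have "(\<Sum>x\<in>S. (f x)\<^sup>2) ^ 4 = ((\<Sum>x\<in>S. (f x)\<^sup>2)\<^sup>2)\<^sup>2" by simp
  also have "\<dots> \<le> ((\<Sum>x\<in>S. f x ^ 4) * card S)\<^sup>2" using sq4 by (intro power_mono) auto
  also have "\<dots> \<le> (\<Sum>x\<in>S. f x ^ 8) * card S * (real (card S))\<^sup>2"
    using sq8 by (simp add: power_mult_distrib mult_right_mono)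
  finally show ?thesis by (simp add: power2_eq_square power3_eq_cube algebra_simps)
qed

lemma (in finite_measure) integrable_power_le_4:
  fixes X :: "'a \<Rightarrow> real"
  assumes "X \<in> borel_measurable M" "integrable M (\<lambda>\<omega>. X \<omega> ^ 4)" "k \<le> 4"
  shows "integrable M (\<lambda>\<omega>. X \<omega> ^ k)"
proof (rule Bochner_Integration.integrable_bound)
  show "integrable M (\<lambda>\<omega>. 1 + X \<omega> ^ 4)" using assms by auto
  have "\<bar>x\<bar> ^ k \<le> 1 + x ^ 4" for x :: real
  proof (cases "\<bar>x\<bar> \<le> 1")
    case True
    moreover have "0 \<le> x ^ 4" using zero_le_power2[of "x\<^sup>2"] by simp
    moreover have "\<bar>x\<bar> ^ k \<le> 1" using True by (simp add: power_le_one)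
    ultimately show ?thesis by linarith
  next
    case False
    then have "\<bar>x\<bar> ^ k \<le> \<bar>x\<bar> ^ 4" using assms(3) by (intro power_increasing) auto
    then show ?thesis by (simp add: power_abs)
  qed
  then show "AE \<omega> in M. norm (X \<omega> ^ k) \<le> norm (1 + X \<omega> ^ 4)"
    by (auto simp: power_abs)
qed (use assms in measurable)

lemma (in prob_space) second_moment_le_fourth_moment:
  fixes X :: "'a \<Rightarrow> real"
  assumes "X \<in> borel_measurable M" "integrable M (\<lambda>\<omega>. X \<omega> ^ 4)"
  shows "expectation (\<lambda>\<omega>. (X \<omega>)\<^sup>2) \<le> (1 + expectation (\<lambda>\<omega>. X \<omega> ^ 4)) / 2"
proof -
  have "expectation (\<lambda>\<omega>. (X \<omega>)\<^sup>2) \<le> expectation (\<lambda>\<omega>. (1 + X \<omega> ^ 4) / 2)"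
  proof (rule integral_mono)
    fix \<omega> show "(X \<omega>)\<^sup>2 \<le> (1 + X \<omega> ^ 4) / 2"
      using zero_le_power2[of "(X \<omega>)\<^sup>2 - 1"] by (simp add: power2_eq_square power4_eq_xxxx algebra_simps)
  qed (use assms in \<open>auto intro: integrable_power_le_4\<close>)
  also have "\<dots> = (1 + expectation (\<lambda>\<omega>. X \<omega> ^ 4)) / 2"
    using assms prob_space by simp
  finally show ?thesis .
qed

lemma (in prob_space) indep_var_moments_add:
  fixes X Y :: "'a \<Rightarrow> real"
  assumes ind: "indep_var borel X borel Y"
    and mean: "expectation X = 0" "expectation Y = 0"
    and int4: "integrable M (\<lambda>\<omega>. X \<omega> ^ 4)" "integrable M (\<lambda>\<omega>. Y \<omega> ^ 4)"
  shows "integrable M (\<lambda>\<omega>. (X \<omega> + Y \<omega>) ^ 4)"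
    and "expectation (\<lambda>\<omega>. (X \<omega> + Y \<omega>)\<^sup>2) = expectation (\<lambda>\<omega>. (X \<omega>)\<^sup>2) + expectation (\<lambda>\<omega>. (Y \<omega>)\<^sup>2)"
    and "expectation (\<lambda>\<omega>. (X \<omega> + Y \<omega>) ^ 4) = expectation (\<lambda>\<omega>. X \<omega> ^ 4)
           + 6 * (expectation (\<lambda>\<omega>. (X \<omega>)\<^sup>2) * expectation (\<lambda>\<omega>. (Y \<omega>)\<^sup>2)) + expectation (\<lambda>\<omega>. Y \<omega> ^ 4)"
proof -
  have [measurable]: "X \<in> borel_measurable M" "Y \<in> borel_measurable M"
    using indep_var_rv1[OF ind] indep_var_rv2[OF ind] by auto
  have intX: "integrable M (\<lambda>\<omega>. X \<omega> ^ a)" and intY: "integrable M (\<lambda>\<omega>. Y \<omega> ^ a)" if "a \<le> 4" for a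
    using that int4 by (auto intro: integrable_power_le_4)
  have prod: "has_bochner_integral M (\<lambda>\<omega>. X \<omega> ^ a * Y \<omega> ^ b)
      (expectation (\<lambda>\<omega>. X \<omega> ^ a) * expectation (\<lambda>\<omega>. Y \<omega> ^ b))" if "a \<le> 4" "b \<le> 4" for a b
  proof -
    have "indep_var borel (\<lambda>\<omega>. X \<omega> ^ a) borel (\<lambda>\<omega>. Y \<omega> ^ b)"
      using indep_var_compose[OF ind, of "\<lambda>x. x ^ a" borel "\<lambda>x. x ^ b" borel] by (simp add: comp_def)
    from indep_var_integrable[OF this] indep_var_lebesgue_integral[OF this]
    show ?thesis using intX[OF that(1)] intY[OF that(2)] by (simp add: has_bochner_integral_iff)
  qed
  have pow: "has_bochner_integral M (\<lambda>\<omega>. X \<omega> ^ a) (expectation (\<lambda>\<omega>. X \<omega> ^ a))"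
    "has_bochner_integral M (\<lambda>\<omega>. Y \<omega> ^ a) (expectation (\<lambda>\<omega>. Y \<omega> ^ a))" if "a \<le> 4" for a
    using intX[OF that] intY[OF that] by (auto intro: has_bochner_integral_integrable)
  have binom2: "(x + y)\<^sup>2 = x\<^sup>2 + 2 * (x * y) + y\<^sup>2"
    and binom4: "(x + y) ^ 4 = x ^ 4 + 4 * (x ^ 3 * y) + 6 * (x\<^sup>2 * y\<^sup>2) + 4 * (x * y ^ 3) + y ^ 4"
    for x y :: real by (simp_all add: power2_eq_square power3_eq_cube power4_eq_xxxx algebra_simps)
  have H2: "has_bochner_integral M (\<lambda>\<omega>. (X \<omega> + Y \<omega>)\<^sup>2)
      (expectation (\<lambda>\<omega>. (X \<omega>)\<^sup>2) + 2 * 0 + expectation (\<lambda>\<omega>. (Y \<omega>)\<^sup>2))"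
    unfolding binom2 using prod[of 1 1] pow[of 2] mean
    by (intro has_bochner_integral_add has_bochner_integral_mult_right) auto
  have H4: "has_bochner_integral M (\<lambda>\<omega>. (X \<omega> + Y \<omega>) ^ 4)
      (expectation (\<lambda>\<omega>. X \<omega> ^ 4) + 4 * 0
       + 6 * (expectation (\<lambda>\<omega>. (X \<omega>)\<^sup>2) * expectation (\<lambda>\<omega>. (Y \<omega>)\<^sup>2)) + 4 * 0 + expectation (\<lambda>\<omega>. Y \<omega> ^ 4))"
    unfolding binom4 using prod[of 3 1] prod[of 2 2] prod[of 1 3] pow[of 4] mean
    by (intro has_bochner_integral_add has_bochner_integral_mult_right) auto
  show "integrable M (\<lambda>\<omega>. (X \<omega> + Y \<omega>) ^ 4)"
    "expectation (\<lambda>\<omega>. (X \<omega> + Y \<omega>)\<^sup>2) = expectation (\<lambda>\<omega>. (X \<omega>)\<^sup>2) + expectation (\<lambda>\<omega>. (Y \<omega>)\<^sup>2)"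
    "expectation (\<lambda>\<omega>. (X \<omega> + Y \<omega>) ^ 4) = expectation (\<lambda>\<omega>. X \<omega> ^ 4)
       + 6 * (expectation (\<lambda>\<omega>. (X \<omega>)\<^sup>2) * expectation (\<lambda>\<omega>. (Y \<omega>)\<^sup>2)) + expectation (\<lambda>\<omega>. Y \<omega> ^ 4)"
    using H2 H4 by (auto simp: has_bochner_integral_iff)
qed

section \<open>Fourth-moment strong law of large numbers\<close>

lemma (in prob_space) partial_sum_fourth_moment_bound:
  fixes Y :: "nat \<Rightarrow> 'a \<Rightarrow> real"
  assumes ind: "indep_vars (\<lambda>_. borel) Y UNIV"
    and mean: "\<And>t. expectation (Y t) = 0"
    and int4: "\<And>t. integrable M (\<lambda>\<omega>. Y t \<omega> ^ 4)"
    and bound: "\<And>t. expectation (\<lambda>\<omega>. Y t \<omega> ^ 4) \<le> K"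
  obtains B where "\<And>T. integrable M (\<lambda>\<omega>. (\<Sum>t<T. Y t \<omega>) ^ 4)"
    and "\<And>T. expectation (\<lambda>\<omega>. (\<Sum>t<T. Y t \<omega>) ^ 4) \<le> B * (real T)\<^sup>2"
proof -
  have [measurable]: "Y t \<in> borel_measurable M" for t
    using ind by (auto simp: indep_vars_def)
  define v where "v = (1 + K) / 2"
  have second: "expectation (\<lambda>\<omega>. (Y t \<omega>)\<^sup>2) \<le> v" for t
    using second_moment_le_fourth_moment[OF _ int4[of t]] bound[of t] unfolding v_def by simp
  have "0 \<le> expectation (\<lambda>\<omega>. Y 0 \<omega> ^ 4)"
    by (intro integral_nonneg_AE) (simp add: zero_le_even_power')
  then have K: "0 \<le> K" using bound[of 0] by linarith
  define S where "S T \<omega> = (\<Sum>t<T. Y t \<omega>)" for T \<omega>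
  have [measurable]: "S T \<in> borel_measurable M" for T unfolding S_def by measurable
  have "integrable M (\<lambda>\<omega>. S T \<omega> ^ 4) \<and> expectation (\<lambda>\<omega>. (S T \<omega>)\<^sup>2) \<le> real T * v
      \<and> expectation (\<lambda>\<omega>. S T \<omega> ^ 4) \<le> (3 * v\<^sup>2 + K) * (real T)\<^sup>2" for T
  proof (induction T)
    case 0
    then show ?case by (simp add: S_def)
  next
    case (Suc T)
    have S_Suc: "S (Suc T) = (\<lambda>\<omega>. Y T \<omega> + S T \<omega>)" by (simp add: S_def fun_eq_iff)
    have indep: "indep_var borel (Y T) borel (S T)"
      unfolding S_def[abs_def] using indep_vars_subset[OF ind] by (intro indep_vars_sum) auto
    have "expectation (S T) = 0"
      unfolding S_def using mean integrable_power_le_4[OF _ int4, of _ 1]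
      by (subst Bochner_Integration.integral_sum) auto
    note moments = indep_var_moments_add[OF indep mean this int4 conjunct1[OF Suc.IH]]
    have "expectation (\<lambda>\<omega>. (Y T \<omega>)\<^sup>2) * expectation (\<lambda>\<omega>. (S T \<omega>)\<^sup>2) \<le> v * (real T * v)"
      using Suc.IH second[of T] K unfolding v_def by (intro mult_mono integral_nonneg_AE) auto
    then have "expectation (\<lambda>\<omega>. S (Suc T) \<omega> ^ 4) \<le> K + 6 * (v * (real T * v)) + (3 * v\<^sup>2 + K) * (real T)\<^sup>2"
      using moments(3) Suc.IH bound[of T] unfolding S_Suc by linarith
    also have "\<dots> \<le> (3 * v\<^sup>2 + K) * (real (Suc T))\<^sup>2"
      using K by (simp add: power2_eq_square algebra_simps)
    finally show ?case using moments(1,2) Suc.IH second[of T] by (simp add: S_Suc algebra_simps)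
  qed
  then show ?thesis using that unfolding S_def by blast
qed

lemma (in prob_space) AE_eventually_abs_less_of_fourth_moment:
  fixes S :: "nat \<Rightarrow> 'a \<Rightarrow> real"
  assumes [measurable]: "\<And>T. S T \<in> borel_measurable M"
    and int4: "\<And>T. integrable M (\<lambda>\<omega>. S T \<omega> ^ 4)"
    and bound: "\<And>T. expectation (\<lambda>\<omega>. S T \<omega> ^ 4) \<le> B * (real T)\<^sup>2"
    and e: "e > 0"
  shows "AE \<omega> in M. eventually (\<lambda>T. \<bar>S T \<omega>\<bar> < e * real T) sequentially"
proof -
  define A where "A T = {\<omega>\<in>space M. (e * real T) ^ 4 \<le> S T \<omega> ^ 4}" for T
  have [measurable]: "A T \<in> sets M" for T unfolding A_def by measurable
  have Markov: "measure M (A T) \<le> B / e ^ 4 * inverse ((real T)\<^sup>2)" if "T \<ge> 1" for T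
  proof -
    have "measure M (A T) \<le> expectation (\<lambda>\<omega>. S T \<omega> ^ 4) / (e * real T) ^ 4"
      unfolding A_def using int4 that e by (intro integral_Markov_inequality_measure) auto
    also have "\<dots> \<le> B * (real T)\<^sup>2 / (e * real T) ^ 4"
      using bound[of T] by (intro divide_right_mono) auto
    also have "\<dots> = B / e ^ 4 * inverse ((real T)\<^sup>2)"
      using that e by (simp add: field_simps power_mult_distrib power2_eq_square power4_eq_xxxx)
    finally show ?thesis .
  qed
  have "summable (\<lambda>T. measure M (A T))"
  proof (rule summable_comparison_test')
    show "summable (\<lambda>T. B / e ^ 4 * inverse ((real T)\<^sup>2))"
      using inverse_power_summable[of 2, where 'a=real] by (intro summable_mult) auto
  qed (use Markov in auto)
  then have "AE \<omega> in M. eventually (\<lambda>T. \<omega> \<in> space M - A T) sequentially"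
    by (intro borel_cantelli_AE1) (auto intro: emeasure_finite[THEN less_top[THEN iffD1]])
  then show ?thesis
  proof eventually_elim
    case (elim \<omega>)
    show ?case
    proof (rule eventually_mono[OF elim])
      fix T assume "\<omega> \<in> space M - A T"
      then have "\<bar>S T \<omega>\<bar> ^ 4 < (e * real T) ^ 4"
        unfolding A_def by (auto simp: power_even_abs_numeral)
      then show "\<bar>S T \<omega>\<bar> < e * real T"
        by (rule power_less_imp_less_base) (use e in auto)
    qed
  qed
qed

lemma LIMSEQ_divide_real_zero_if_eventually_abs_less:
  fixes f :: "nat \<Rightarrow> real"
  assumes "\<And>m. eventually (\<lambda>T. \<bar>f T\<bar> < real T / real (Suc m)) sequentially"
  shows "(\<lambda>T. f T / real T) \<longlonglongrightarrow> 0"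
proof (rule tendstoI)
  fix r :: real assume "r > 0"
  then obtain m where m: "inverse (real (Suc m)) < r" using reals_Archimedean by blast
  show "eventually (\<lambda>T. dist (f T / real T) 0 < r) sequentially"
    using assms[of m] eventually_gt_at_top[of 0]
  proof eventually_elim
    case (elim T)
    then have "\<bar>f T\<bar> / real T < 1 / real (Suc m)" by (simp add: field_simps)
    then show ?case using m by (simp add: inverse_eq_divide)
  qed
qed

lemma (in prob_space) fourth_moment_affine:
  fixes X :: "'a \<Rightarrow> real"
  assumes [measurable]: "X \<in> borel_measurable M"
    and int4: "integrable M (\<lambda>\<omega>. X \<omega> ^ 4)" and bound: "expectation (\<lambda>\<omega>. X \<omega> ^ 4) \<le> C"
  shows "integrable M (\<lambda>\<omega>. (a * X \<omega> + b) ^ 4)"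
    and "expectation (\<lambda>\<omega>. (a * X \<omega> + b) ^ 4) \<le> 8 * (a ^ 4 * C + b ^ 4)"
proof -
  have le: "(a * X \<omega> + b) ^ 4 \<le> 8 * (a ^ 4 * X \<omega> ^ 4 + b ^ 4)" for \<omega>
    using power4_add_le[of "a * X \<omega>" b] by (simp add: power_mult_distrib)
  have int: "integrable M (\<lambda>\<omega>. 8 * (a ^ 4 * X \<omega> ^ 4 + b ^ 4))" using int4 by simp
  show int': "integrable M (\<lambda>\<omega>. (a * X \<omega> + b) ^ 4)"
    by (rule Bochner_Integration.integrable_bound[OF int]) (use le in \<open>auto simp: zero_le_even_power'\<close>)
  have "expectation (\<lambda>\<omega>. (a * X \<omega> + b) ^ 4) \<le> expectation (\<lambda>\<omega>. 8 * (a ^ 4 * X \<omega> ^ 4 + b ^ 4))"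
    by (rule integral_mono[OF int' int le])
  also have "\<dots> = 8 * (a ^ 4 * expectation (\<lambda>\<omega>. X \<omega> ^ 4) + b ^ 4)"
    using int4 prob_space by (simp add: Bochner_Integration.integral_add)
  also have "\<dots> \<le> 8 * (a ^ 4 * C + b ^ 4)"
    using bound by (simp add: mult_left_mono zero_le_even_power')
  finally show "expectation (\<lambda>\<omega>. (a * X \<omega> + b) ^ 4) \<le> 8 * (a ^ 4 * C + b ^ 4)" .
qed

theorem (in prob_space) strong_law_fourth_moment:
  fixes Y :: "nat \<Rightarrow> 'a \<Rightarrow> real"
  assumes ind: "indep_vars (\<lambda>_. borel) Y UNIV"
    and int4: "\<And>t. integrable M (\<lambda>\<omega>. Y t \<omega> ^ 4)"
    and mean: "\<And>t. expectation (Y t) = \<mu>"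
    and bound: "\<And>t. expectation (\<lambda>\<omega>. Y t \<omega> ^ 4) \<le> K"
  shows "AE \<omega> in M. (\<lambda>T. (\<Sum>t<T. Y t \<omega>) / real T) \<longlonglongrightarrow> \<mu>"
proof -
  have [measurable]: "Y t \<in> borel_measurable M" for t
    using ind by (auto simp: indep_vars_def)
  define Y' where "Y' t \<omega> = Y t \<omega> - \<mu>" for t \<omega>
  have ind': "indep_vars (\<lambda>_. borel) Y' UNIV"
    unfolding Y'_def using indep_vars_compose2[OF ind, of "\<lambda>_ x. x - \<mu>"] by simp
  have int4': "integrable M (\<lambda>\<omega>. Y' t \<omega> ^ 4)"
    and bound': "expectation (\<lambda>\<omega>. Y' t \<omega> ^ 4) \<le> 8 * (K + \<mu> ^ 4)" for t
    using fourth_moment_affine[OF _ int4 bound, of t 1 "- \<mu>"] by (simp_all add: Y'_def)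
  have mean': "expectation (Y' t) = 0" for t
    using mean[of t] integrable_power_le_4[OF _ int4, of t 1] prob_space
    unfolding Y'_def by (simp add: Bochner_Integration.integral_diff)
  obtain B where "\<And>T. integrable M (\<lambda>\<omega>. (\<Sum>t<T. Y' t \<omega>) ^ 4)"
    and "\<And>T. expectation (\<lambda>\<omega>. (\<Sum>t<T. Y' t \<omega>) ^ 4) \<le> B * (real T)\<^sup>2"
    using partial_sum_fourth_moment_bound[OF ind' mean' int4' bound'] by blast
  then have "AE \<omega> in M. \<forall>m. eventually (\<lambda>T. \<bar>\<Sum>t<T. Y' t \<omega>\<bar> < (1 / real (Suc m)) * real T) sequentially"
    unfolding AE_all_countable by (intro allI AE_eventually_abs_less_of_fourth_moment) (auto simp: Y'_def)
  then show ?thesis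
  proof eventually_elim
    case (elim \<omega>)
    then have "(\<lambda>T. (\<Sum>t<T. Y' t \<omega>) / real T + \<mu>) \<longlonglongrightarrow> 0 + \<mu>"
      by (intro tendsto_add LIMSEQ_divide_real_zero_if_eventually_abs_less tendsto_const) auto
    moreover have "eventually (\<lambda>T. (\<Sum>t<T. Y' t \<omega>) / real T + \<mu> = (\<Sum>t<T. Y t \<omega>) / real T) sequentially"
      using eventually_gt_at_top[of 0]
      by eventually_elim (simp add: Y'_def sum_subtractf field_simps)
    ultimately show ?case by (simp add: tendsto_cong)
  qed
qed

section \<open>Selecting the best child\<close>

lemma selected_argmin:
  assumes "lam \<ge> 1"
  shows selected_less: "selected lam f Y < lam"
    and selected_le: "\<And>k. k < lam \<Longrightarrow> f (Y (selected lam f Y)) \<le> f (Y k)"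
proof -
  have "finite ((\<lambda>k. f (Y k)) ` {..<lam})" "(\<lambda>k. f (Y k)) ` {..<lam} \<noteq> {}"
    using assms by (auto simp: lessThan_empty_iff)
  then have "Min ((\<lambda>k. f (Y k)) ` {..<lam}) \<in> (\<lambda>k. f (Y k)) ` {..<lam}" by (rule Min_in)
  then obtain i where "i < lam" "f (Y i) = Min ((\<lambda>k. f (Y k)) ` {..<lam})" by auto
  then have "\<exists>i. i < lam \<and> (\<forall>k<lam. f (Y i) \<le> f (Y k))" by auto
  from LeastI_ex[OF this] show "selected lam f Y < lam" "\<And>k. k < lam \<Longrightarrow> f (Y (selected lam f Y)) \<le> f (Y k)"
    unfolding selected_def by auto
qed

lemma selected_Min:
  assumes "lam \<ge> 1"
  shows "f (Y (selected lam f Y)) = Min ((\<lambda>k. f (Y k)) ` {..<lam})"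
  using selected_argmin[OF assms] assms
  by (intro antisym Min.coboundedI Min.boundedI) (auto simp: lessThan_empty_iff)

lemma selected_eq_iff:
  assumes "lam \<ge> 1"
  shows "selected lam f Y = i \<longleftrightarrow>
    i < lam \<and> (\<forall>k<lam. f (Y i) \<le> f (Y k)) \<and> (\<forall>k<i. \<exists>k'<lam. f (Y k') < f (Y k))"
proof
  assume "selected lam f Y = i"
  moreover have "\<exists>k'<lam. f (Y k') < f (Y k)" if "k < selected lam f Y" for k
  proof -
    have "k < lam" using that selected_less[OF assms, of f Y] by linarith
    then show ?thesis using not_less_Least[OF that[unfolded selected_def]] by (auto simp: not_le)
  qed
  ultimately show "i < lam \<and> (\<forall>k<lam. f (Y i) \<le> f (Y k)) \<and> (\<forall>k<i. \<exists>k'<lam. f (Y k') < f (Y k))"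
    using selected_less[OF assms, of f Y] selected_le[OF assms, of _ f Y] by auto
next
  assume i: "i < lam \<and> (\<forall>k<lam. f (Y i) \<le> f (Y k)) \<and> (\<forall>k<i. \<exists>k'<lam. f (Y k') < f (Y k))"
  show "selected lam f Y = i"
    unfolding selected_def
  proof (rule Least_equality)
    fix j assume "j < lam \<and> (\<forall>k<lam. f (Y j) \<le> f (Y k))"
    then show "i \<le> j" using i by (metis leI less_le_not_le)
  qed (use i in auto)
qed

lemma selected_cong:
  assumes "\<And>i j. i < lam \<Longrightarrow> j < lam \<Longrightarrow> f (Y i) \<le> f (Y j) \<longleftrightarrow> g (Z i) \<le> g (Z j)"
  shows "selected lam f Y = selected lam g Z"
proof -
  have "(i < lam \<and> (\<forall>k<lam. f (Y i) \<le> f (Y k))) \<longleftrightarrow> (i < lam \<and> (\<forall>k<lam. g (Z i) \<le> g (Z k)))" for i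
    using assms by auto
  then show ?thesis unfolding selected_def by simp
qed

lemma selected_apply_eq_sum:
  assumes "lam \<ge> 1"
  shows "h (selected lam f Y) = (\<Sum>i<lam. if selected lam f Y = i then h i else 0)"
  using selected_less[OF assms, of f Y] by (simp add: sum.delta)

lemma measurable_selected_eq:
  assumes "lam \<ge> 1" and [measurable]: "\<And>k. k < lam \<Longrightarrow> (\<lambda>x. f (Y x k)) \<in> borel_measurable N"
  shows "Measurable.pred N (\<lambda>x. selected lam f (Y x) = i)"
proof -
  have [measurable]: "Measurable.pred N (\<lambda>x. f (Y x k) \<le> f (Y x k'))"
    "Measurable.pred N (\<lambda>x. f (Y x k) < f (Y x k'))" if "k < lam" "k' < lam" for k k'
    using that by measurable
  have "Measurable.pred N (\<lambda>x. i < lam \<and> (\<forall>k<lam. f (Y x i) \<le> f (Y x k))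
      \<and> (\<forall>k<i. \<exists>k'<lam. f (Y x k') < f (Y x k)))"
    by measurable
  then show ?thesis by (simp only: selected_eq_iff[OF assms(1)])
qed

lemma borel_measurable_selected_apply:
  fixes h :: "nat \<Rightarrow> 'x \<Rightarrow> real"
  assumes "lam \<ge> 1" and "\<And>k. k < lam \<Longrightarrow> (\<lambda>x. f (Y x k)) \<in> borel_measurable N"
    and [measurable]: "\<And>i. i < lam \<Longrightarrow> h i \<in> borel_measurable N"
  shows "(\<lambda>x. h (selected lam f (Y x)) x) \<in> borel_measurable N"
proof -
  have [measurable]: "Measurable.pred N (\<lambda>x. selected lam f (Y x) = i)" for i
    using measurable_selected_eq assms(1,2) .
  have "(\<lambda>x. \<Sum>i<lam. if selected lam f (Y x) = i then h i x else 0) \<in> borel_measurable N"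
    by measurable
  then show ?thesis by (subst selected_apply_eq_sum[OF assms(1)]) simp
qed

section \<open>Step-size adaptation without cumulation\<close>

definition selected_sqnorm :: "nat \<Rightarrow> nat \<Rightarrow> (nat \<Rightarrow> nat \<Rightarrow> real) \<Rightarrow> real" where
  "selected_sqnorm lam n m = (\<Sum>j<n. (m (selected lam (\<lambda>x. x 0) m) j)\<^sup>2)"

lemma csa_es_step_size_without_cumulation:
  assumes "s0 > 0"
  shows "fst (snd (csa_es n lam 1 d (\<lambda>x. x 0) X0 s0 p0 xi t))
    = s0 * exp (\<Sum>k<t. (selected_sqnorm lam n (xi k) / real n - 1) / (2 * d))"
proof (induction t)
  case 0
  then show ?case by simp
next
  case (Suc t)
  obtain X s p where state: "csa_es n lam 1 d (\<lambda>x. x 0) X0 s0 p0 xi t = (X, s, p)"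
    by (metis prod.exhaust)
  have s: "s = s0 * exp (\<Sum>k<t. (selected_sqnorm lam n (xi k) / real n - 1) / (2 * d))"
    using Suc.IH state by simp
  then have "s > 0" using assms by simp
  \<comment> \<open>For \<sigma>_t > 0, ranking the children by their first coordinate is ranking them by
    their first noise coordinate; with c = 1 the new path is the selected step itself.\<close>
  then have "selected lam (\<lambda>x. x 0) (\<lambda>i j. X j + s * xi t i j) = selected lam (\<lambda>x. x 0) (xi t)"
    by (intro selected_cong) simp
  then have "fst (snd (csa_es n lam 1 d (\<lambda>x. x 0) X0 s0 p0 xi (Suc t)))
      = s * exp ((selected_sqnorm lam n (xi t) / real n - 1) / (2 * d))"
    by (simp add: state Let_def selected_sqnorm_def)
  then show ?case by (simp add: s exp_add)
qed

section \<open>The selected step of a standard normal array\<close>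

lemma (in prob_space) indep_vars_reindex:
  assumes "indep_vars M' X I" "inj_on f J" "f ` J \<subseteq> I"
  shows "indep_vars (\<lambda>j. M' (f j)) (\<lambda>j. X (f j)) J"
proof -
  have "indep_vars (\<lambda>j. PiM {f j} M') (\<lambda>j \<omega>. restrict (\<lambda>i. X i \<omega>) {f j}) J"
    using assms by (intro indep_vars_restrict) (auto simp: disjoint_family_on_def inj_on_def)
  then have "indep_vars (\<lambda>j. M' (f j)) (\<lambda>j \<omega>. (\<lambda>v. v (f j)) (restrict (\<lambda>i. X i \<omega>) {f j})) J"
    by (rule indep_vars_compose2) (rule measurable_component_singleton, simp)
  then show ?thesis by simp
qed

lemma (in prob_space) std_normal_moment:
  assumes "distributed M lborel X std_normal_density"
  shows "integrable M (\<lambda>\<omega>. X \<omega> ^ k)"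
    and "expectation (\<lambda>\<omega>. X \<omega> ^ k) = (\<integral>x. std_normal_density x * x ^ k \<partial>lborel)"
  using distributed_integrable[OF assms, of "\<lambda>x. x ^ k"] distributed_integral[OF assms, of "\<lambda>x. x ^ k"]
    integrable_std_normal_moment[of k]
  by (simp_all add: normal_density_nonneg)

lemma (in prob_space) expectation_Min_sq_std_normal:
  assumes "lam \<ge> 1" and indep: "indep_vars (\<lambda>_. borel) X {..<lam}"
    and normal: "\<And>k. k < lam \<Longrightarrow> distributed M lborel (X k) std_normal_density"
  shows "expectation (\<lambda>\<omega>. (Min ((\<lambda>k. X k \<omega>) ` {..<lam}))\<^sup>2) = min_normal_second_moment lam"
proof -
  have [measurable]: "k < lam \<Longrightarrow> X k \<in> borel_measurable M" for k
    using distributed_measurable[OF normal] by simp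
  have "distr M borel (X k) = std_normal_measure" if "k < lam" for k
  proof -
    have "distr M borel (X k) = distr M lborel (X k)" by (rule distr_cong) auto
    also have "\<dots> = std_normal_measure"
      unfolding std_normal_measure_def by (rule distributed_distr_eq_density[OF normal[OF that]])
    finally show ?thesis .
  qed
  then have law: "distr M (PiM {..<lam} (\<lambda>_. borel)) (\<lambda>\<omega>. \<lambda>k\<in>{..<lam}. X k \<omega>)
      = PiM {..<lam} (\<lambda>_. std_normal_measure)"
    using indep indep_vars_iff_distr_eq_PiM'[where I="{..<lam}" and M'="\<lambda>_. borel" and X=X] \<open>lam \<ge> 1\<close>
    by (auto simp: lessThan_empty_iff intro: PiM_cong)
  have "min_normal_second_moment lam = integral\<^sup>L
      (distr M (PiM {..<lam} (\<lambda>_. borel)) (\<lambda>\<omega>. \<lambda>k\<in>{..<lam}. X k \<omega>)) (\<lambda>x. (Min (x ` {..<lam}))\<^sup>2)"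
    unfolding min_normal_second_moment_def law ..
  also have "\<dots> = expectation (\<lambda>\<omega>. (Min ((\<lambda>k\<in>{..<lam}. X k \<omega>) ` {..<lam}))\<^sup>2)"
    by (rule integral_distr) measurable
  finally show ?thesis by simp
qed

lemma selected_sqnorm_cong:
  assumes "lam \<ge> 1" "n \<ge> 1" and eq: "\<And>i j. i < lam \<Longrightarrow> j < n \<Longrightarrow> m i j = m' i j"
  shows "selected_sqnorm lam n m = selected_sqnorm lam n m'"
proof -
  have sel: "selected lam (\<lambda>x. x 0) m = selected lam (\<lambda>x. x 0) m'"
    using assms by (intro selected_cong) simp
  have "selected lam (\<lambda>x. x 0) m < lam" by (rule selected_less[OF assms(1)])
  then show ?thesis
    unfolding selected_sqnorm_def sel[symmetric] by (intro sum.cong refl) (simp add: eq sel)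
qed

lemma selected_sqnorm_nonneg: "0 \<le> selected_sqnorm lam n m"
  unfolding selected_sqnorm_def by (simp add: sum_nonneg)

lemma selected_sqnorm_le_sum:
  assumes "lam \<ge> 1"
  shows "selected_sqnorm lam n m \<le> (\<Sum>(i, j)\<in>{..<lam} \<times> {..<n}. (m i j)\<^sup>2)"
proof -
  have "selected_sqnorm lam n m \<le> (\<Sum>j<n. \<Sum>i<lam. (m i j)\<^sup>2)"
    unfolding selected_sqnorm_def using selected_less[OF assms]
    by (intro sum_mono member_le_sum) auto
  also have "\<dots> = (\<Sum>(i, j)\<in>{..<lam} \<times> {..<n}. (m i j)\<^sup>2)"
    by (subst sum.swap) (simp add: sum.cartesian_product)
  finally show ?thesis .
qed

lemma borel_measurable_selected_sqnorm:
  assumes "lam \<ge> 1" "n \<ge> 1" and m: "\<And>i j. i < lam \<Longrightarrow> j < n \<Longrightarrow> (\<lambda>x. m x i j) \<in> borel_measurable N"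
  shows "(\<lambda>x. selected_sqnorm lam n (m x)) \<in> borel_measurable N"
proof -
  have "(\<lambda>x. (m x (selected lam (\<lambda>x. x 0) (m x)) j)\<^sup>2) \<in> borel_measurable N" if "j < n" for j
  proof (rule borel_measurable_selected_apply[where f="\<lambda>x. x 0" and Y=m and h="\<lambda>i x. (m x i j)\<^sup>2", OF assms(1)])
    show "(\<lambda>x. m x k 0) \<in> borel_measurable N" if "k < lam" for k
      using m that assms(2) by simp
    show "(\<lambda>x. (m x i j)\<^sup>2) \<in> borel_measurable N" if "i < lam" for i
      using m[OF that \<open>j < n\<close>] by (rule borel_measurable_power)
  qed
  then show ?thesis unfolding selected_sqnorm_def by (intro borel_measurable_sum) simp
qed

locale std_normal_array = prob_space +
  fixes lam n :: nat and \<xi> :: "nat \<Rightarrow> nat \<Rightarrow> 'a \<Rightarrow> real"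
  assumes lam_pos: "lam \<ge> 1" and n_pos: "n \<ge> 1"
    and indep: "indep_vars (\<lambda>_. borel) (\<lambda>(i, j). \<xi> i j) ({..<lam} \<times> {..<n})"
    and normal: "\<And>i j. i < lam \<Longrightarrow> j < n \<Longrightarrow> distributed M lborel (\<xi> i j) std_normal_density"
begin

lemma borel_measurable_entry [measurable]: "i < lam \<Longrightarrow> j < n \<Longrightarrow> \<xi> i j \<in> borel_measurable M"
  using distributed_measurable[OF normal] by simp

lemma entry_moment:
  assumes "i < lam" "j < n"
  shows "integrable M (\<lambda>\<omega>. \<xi> i j \<omega> ^ k)"
    and "expectation (\<lambda>\<omega>. \<xi> i j \<omega> ^ k) = (\<integral>x. std_normal_density x * x ^ k \<partial>lborel)"
  using std_normal_moment[OF normal[OF assms]] by auto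

lemma entry_second_moment: "i < lam \<Longrightarrow> j < n \<Longrightarrow> expectation (\<lambda>\<omega>. (\<xi> i j \<omega>)\<^sup>2) = 1"
  using entry_moment(2)[of i j 2] integral_std_normal_moment_even[of 1] by simp

definition selected_index :: "'a \<Rightarrow> nat" where
  "selected_index \<omega> = selected lam (\<lambda>x. x 0) (\<lambda>i j. \<xi> i j \<omega>)"

lemma selected_index_less: "selected_index \<omega> < lam"
  unfolding selected_index_def by (rule selected_less[OF lam_pos])

lemma pred_selected_index [measurable]: "Measurable.pred M (\<lambda>\<omega>. selected_index \<omega> = i)"
  unfolding selected_index_def using n_pos
  by (intro measurable_selected_eq[OF lam_pos, where f="\<lambda>x. x 0" and Y="\<lambda>\<omega> i j. \<xi> i j \<omega>"]) simp

lemma selected_entry_sq_eq_sum: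
  "(\<xi> (selected_index \<omega>) j \<omega>)\<^sup>2 = (\<Sum>i<lam. (if selected_index \<omega> = i then 1 else 0) * (\<xi> i j \<omega>)\<^sup>2)"
proof -
  have "(\<Sum>i<lam. (if selected_index \<omega> = i then 1 else 0) * (\<xi> i j \<omega>)\<^sup>2)
      = (\<Sum>i<lam. if selected_index \<omega> = i then (\<xi> i j \<omega>)\<^sup>2 else 0)"
    by (intro sum.cong) auto
  then show ?thesis using selected_index_less[of \<omega>] by (simp add: sum.delta)
qed

lemma integrable_selection_entry_sq:
  assumes "i < lam" "j < n"
  shows "integrable M (\<lambda>\<omega>. (if selected_index \<omega> = i then 1 else 0) * (\<xi> i j \<omega>)\<^sup>2)"
proof (rule Bochner_Integration.integrable_bound[OF entry_moment(1)[OF assms, of 2]])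
  show "AE \<omega> in M. norm ((if selected_index \<omega> = i then 1 else 0) * (\<xi> i j \<omega>)\<^sup>2) \<le> norm (\<xi> i j \<omega> ^ 2)"
    by simp
qed (use assms in measurable)

lemma integrable_selected_entry_sq: "j < n \<Longrightarrow> integrable M (\<lambda>\<omega>. (\<xi> (selected_index \<omega>) j \<omega>)\<^sup>2)"
  unfolding selected_entry_sq_eq_sum by (intro Bochner_Integration.integrable_sum integrable_selection_entry_sq) auto

lemma indep_selection_entry:
  assumes "i < lam" "0 < j" "j < n"
  shows "indep_var borel (\<lambda>\<omega>. if selected_index \<omega> = i then 1 else 0 :: real) borel (\<lambda>\<omega>. (\<xi> i j \<omega>)\<^sup>2)"
proof -
  \<comment> \<open>The selection only sees the first column A, which does not contain (i, j).\<close>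
  define A where "A = {..<lam} \<times> {0::nat}"
  define V where "V B \<omega> = restrict (\<lambda>p. (\<lambda>(k, l). \<xi> k l) p \<omega>) B" for B \<omega>
  define choice where "choice v = (if selected lam (\<lambda>x. x 0) (\<lambda>k l. v (k, l)) = i then 1 else 0 :: real)"
    for v :: "nat \<times> nat \<Rightarrow> real"
  have "choice \<in> borel_measurable (PiM A (\<lambda>_. borel))"
  proof -
    have "Measurable.pred (PiM A (\<lambda>_. borel)) (\<lambda>v. selected lam (\<lambda>x. x 0) (\<lambda>k l. v (k, l)) = i)"
      by (rule measurable_selected_eq[OF lam_pos]) (auto simp: A_def intro: measurable_component_singleton)
    then show ?thesis unfolding choice_def by measurable
  qed
  moreover have "(\<lambda>v. (v (i, j))\<^sup>2) \<in> borel_measurable (PiM {(i, j)} (\<lambda>_. borel :: real measure))"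
    by (intro borel_measurable_power measurable_component_singleton) simp
  moreover have "indep_var (PiM A (\<lambda>_. borel)) (V A) (PiM {(i, j)} (\<lambda>_. borel)) (V {(i, j)})"
    unfolding V_def using assms n_pos by (intro indep_var_restrict[OF indep]) (auto simp: A_def)
  ultimately have "indep_var borel (choice \<circ> V A) borel ((\<lambda>v. (v (i, j))\<^sup>2) \<circ> V {(i, j)})"
    by (intro indep_var_compose) auto
  moreover have "selected lam (\<lambda>x. x 0) (\<lambda>k l. V A \<omega> (k, l)) = selected_index \<omega>" for \<omega>
    unfolding selected_index_def by (intro selected_cong) (simp add: V_def A_def)
  ultimately show ?thesis by (simp add: comp_def choice_def V_def)
qed

lemma expectation_selected_entry_sq:
  assumes "0 < j" "j < n"
  shows "expectation (\<lambda>\<omega>. (\<xi> (selected_index \<omega>) j \<omega>)\<^sup>2) = 1"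
proof -
  define choice where "choice i \<omega> = (if selected_index \<omega> = i then 1 else 0 :: real)" for i \<omega>
  have [measurable]: "choice i \<in> borel_measurable M" for i unfolding choice_def by measurable
  have int_choice: "integrable M (choice i)" for i
    by (rule Bochner_Integration.integrable_bound[of _ "\<lambda>_. 1 :: real"]) (auto simp: choice_def)
  have "expectation (\<lambda>\<omega>. (\<xi> (selected_index \<omega>) j \<omega>)\<^sup>2)
      = (\<Sum>i<lam. expectation (\<lambda>\<omega>. choice i \<omega> * (\<xi> i j \<omega>)\<^sup>2))"
    unfolding selected_entry_sq_eq_sum choice_def using assms
    by (intro Bochner_Integration.integral_sum integrable_selection_entry_sq) auto
  also have "\<dots> = (\<Sum>i<lam. expectation (choice i))"
  proof (intro sum.cong refl)
    fix i assume "i \<in> {..<lam}"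
    then have "indep_var borel (choice i) borel (\<lambda>\<omega>. (\<xi> i j \<omega>)\<^sup>2)" "expectation (\<lambda>\<omega>. (\<xi> i j \<omega>)\<^sup>2) = 1"
      and "integrable M (\<lambda>\<omega>. (\<xi> i j \<omega>)\<^sup>2)"
      using assms indep_selection_entry entry_second_moment entry_moment(1)[of i j 2]
      by (auto simp: choice_def[abs_def])
    then show "expectation (\<lambda>\<omega>. choice i \<omega> * (\<xi> i j \<omega>)\<^sup>2) = expectation (choice i)"
      using int_choice by (simp add: indep_var_lebesgue_integral)
  qed
  also have "\<dots> = expectation (\<lambda>\<omega>. \<Sum>i<lam. choice i \<omega>)"
    using int_choice by (simp add: Bochner_Integration.integral_sum)
  also have "\<dots> = 1"
    using selected_index_less prob_space by (simp add: choice_def sum.delta)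
  finally show ?thesis .
qed

lemma expectation_selected_first_entry_sq:
  "expectation (\<lambda>\<omega>. (\<xi> (selected_index \<omega>) 0 \<omega>)\<^sup>2) = min_normal_second_moment lam"
proof -
  have "\<xi> (selected_index \<omega>) 0 \<omega> = Min ((\<lambda>k. \<xi> k 0 \<omega>) ` {..<lam})" for \<omega>
    using selected_Min[OF lam_pos, of "\<lambda>x. x 0" "\<lambda>i j. \<xi> i j \<omega>"] by (simp add: selected_index_def)
  moreover have "indep_vars (\<lambda>_. borel) (\<lambda>k. \<xi> k 0) {..<lam}"
  proof -
    have "(\<lambda>k. (k, 0)) ` {..<lam} \<subseteq> {..<lam} \<times> {..<n}" using n_pos by auto
    then show ?thesis using indep_vars_reindex[OF indep, of "\<lambda>k. (k, 0)"] by (simp add: inj_on_def)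
  qed
  ultimately show ?thesis
    using expectation_Min_sq_std_normal[OF lam_pos, of "\<lambda>k. \<xi> k 0"] normal n_pos by simp
qed

lemma selected_sqnorm_eq: "selected_sqnorm lam n (\<lambda>i j. \<xi> i j \<omega>) = (\<Sum>j<n. (\<xi> (selected_index \<omega>) j \<omega>)\<^sup>2)"
  by (simp add: selected_sqnorm_def selected_index_def)

theorem expectation_selected_sqnorm:
  shows "integrable M (\<lambda>\<omega>. selected_sqnorm lam n (\<lambda>i j. \<xi> i j \<omega>))"
    and "expectation (\<lambda>\<omega>. selected_sqnorm lam n (\<lambda>i j. \<xi> i j \<omega>)) = min_normal_second_moment lam + (real n - 1)"
proof -
  show "integrable M (\<lambda>\<omega>. selected_sqnorm lam n (\<lambda>i j. \<xi> i j \<omega>))"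
    unfolding selected_sqnorm_eq by (intro Bochner_Integration.integrable_sum integrable_selected_entry_sq) simp
  obtain n' where n': "n = Suc n'" using n_pos by (cases n) auto
  have "expectation (\<lambda>\<omega>. selected_sqnorm lam n (\<lambda>i j. \<xi> i j \<omega>))
      = (\<Sum>j<n. expectation (\<lambda>\<omega>. (\<xi> (selected_index \<omega>) j \<omega>)\<^sup>2))"
    unfolding selected_sqnorm_eq by (intro Bochner_Integration.integral_sum integrable_selected_entry_sq) simp
  also have "\<dots> = min_normal_second_moment lam + (\<Sum>j<n'. expectation (\<lambda>\<omega>. (\<xi> (selected_index \<omega>) (Suc j) \<omega>)\<^sup>2))"
    unfolding n' sum.lessThan_Suc_shift expectation_selected_first_entry_sq ..
  also have "\<dots> = min_normal_second_moment lam + (real n - 1)"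
    using expectation_selected_entry_sq by (simp add: n')
  finally show "expectation (\<lambda>\<omega>. selected_sqnorm lam n (\<lambda>i j. \<xi> i j \<omega>)) = min_normal_second_moment lam + (real n - 1)" .
qed

lemma fourth_moment_selected_sqnorm:
  shows "integrable M (\<lambda>\<omega>. selected_sqnorm lam n (\<lambda>i j. \<xi> i j \<omega>) ^ 4)"
    and "expectation (\<lambda>\<omega>. selected_sqnorm lam n (\<lambda>i j. \<xi> i j \<omega>) ^ 4) \<le> 105 * real (lam * n) ^ 4"
proof -
  let ?Q = "\<lambda>\<omega>. selected_sqnorm lam n (\<lambda>i j. \<xi> i j \<omega>)"
  define R where "R \<omega> = real (lam * n) ^ 3 * (\<Sum>(i, j)\<in>{..<lam} \<times> {..<n}. \<xi> i j \<omega> ^ 8)" for \<omega>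
  have [measurable]: "?Q \<in> borel_measurable M"
    using lam_pos n_pos by (intro borel_measurable_selected_sqnorm) auto
  have "?Q \<omega> ^ 4 \<le> (\<Sum>(i, j)\<in>{..<lam} \<times> {..<n}. (\<xi> i j \<omega>)\<^sup>2) ^ 4" for \<omega>
    using selected_sqnorm_le_sum[OF lam_pos] selected_sqnorm_nonneg by (intro power_mono) auto
  also have "\<dots> \<omega> \<le> R \<omega>" for \<omega>
    using sum_squares_power4_le[of "\<lambda>(i, j). \<xi> i j \<omega>" "{..<lam} \<times> {..<n}"]
    by (simp add: R_def case_prod_beta)
  finally have le: "?Q \<omega> ^ 4 \<le> R \<omega>" for \<omega> .
  \<comment> \<open>105 = E N^8 = 8! / (2^4 4!)\<close>
  have eighth: "integrable M (\<lambda>\<omega>. \<xi> i j \<omega> ^ 8) \<and> expectation (\<lambda>\<omega>. \<xi> i j \<omega> ^ 8) = 105"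
    if "i < lam" "j < n" for i j
    using entry_moment[OF that, of 8] integral_std_normal_moment_even[of 4] by (simp add: fact_numeral)
  have R: "integrable M R" "expectation R = 105 * real (lam * n) ^ 4"
  proof -
    have "integrable M (\<lambda>\<omega>. \<xi> (fst p) (snd p) \<omega> ^ 8)" "expectation (\<lambda>\<omega>. \<xi> (fst p) (snd p) \<omega> ^ 8) = 105"
      if "p \<in> {..<lam} \<times> {..<n}" for p
      using eighth[of "fst p" "snd p"] that by auto
    then show "integrable M R" "expectation R = 105 * real (lam * n) ^ 4"
      unfolding R_def[abs_def] case_prod_beta
      by (simp_all add: Bochner_Integration.integral_sum power_Suc2[symmetric])
  qed
  show int: "integrable M (\<lambda>\<omega>. ?Q \<omega> ^ 4)"
    by (rule Bochner_Integration.integrable_bound[OF R(1)])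
      (use le in \<open>auto intro: order.trans[OF _ abs_ge_self] simp: zero_le_even_power'\<close>)
  show "expectation (\<lambda>\<omega>. ?Q \<omega> ^ 4) \<le> 105 * real (lam * n) ^ 4"
    using integral_mono[OF int R(1) le] R(2) by simp
qed

end

section \<open>Independent increments of the log step-size\<close>

lemma (in prob_space) indep_vars_blocks:
  fixes X :: "'i \<Rightarrow> 'a \<Rightarrow> real" and \<iota> :: "'t \<Rightarrow> 'j \<Rightarrow> 'i" and G :: "'t \<Rightarrow> ('j \<Rightarrow> real) \<Rightarrow> real"
  assumes indep: "indep_vars (\<lambda>_. borel) X I"
    and sub: "\<And>t. \<iota> t ` J \<subseteq> I" and disj: "disjoint_family (\<lambda>t. \<iota> t ` J)"
    and G: "\<And>t. G t \<in> borel_measurable (PiM J (\<lambda>_. borel))"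
  shows "indep_vars (\<lambda>_. borel) (\<lambda>t \<omega>. G t (\<lambda>p\<in>J. X (\<iota> t p) \<omega>)) UNIV"
proof -
  have "indep_vars (\<lambda>t. PiM (\<iota> t ` J) (\<lambda>_. borel)) (\<lambda>t \<omega>. restrict (\<lambda>i. X i \<omega>) (\<iota> t ` J)) UNIV"
    using sub disj by (intro indep_vars_restrict[OF indep]) auto
  moreover have "(\<lambda>v. G t (\<lambda>p\<in>J. v (\<iota> t p))) \<in> borel_measurable (PiM (\<iota> t ` J) (\<lambda>_. borel))" for t
  proof (rule measurable_compose[OF _ G])
    show "(\<lambda>v. \<lambda>p\<in>J. v (\<iota> t p)) \<in> PiM (\<iota> t ` J) (\<lambda>_. borel) \<rightarrow>\<^sub>M PiM J (\<lambda>_. borel)"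
      by (intro measurable_restrict measurable_component_singleton) auto
  qed
  ultimately have "indep_vars (\<lambda>_. borel)
      (\<lambda>t \<omega>. G t (\<lambda>p\<in>J. restrict (\<lambda>i. X i \<omega>) (\<iota> t ` J) (\<iota> t p))) UNIV"
    by (rule indep_vars_compose2)
  moreover have "(\<lambda>p\<in>J. restrict (\<lambda>i. X i \<omega>) (\<iota> t ` J) (\<iota> t p)) = (\<lambda>p\<in>J. X (\<iota> t p) \<omega>)" for t \<omega>
    by (intro restrict_ext) simp
  ultimately show ?thesis by simp
qed

lemma (in prob_space) std_normal_array_iteration:
  fixes xi :: "nat \<Rightarrow> nat \<Rightarrow> nat \<Rightarrow> 'a \<Rightarrow> real"
  assumes "lam \<ge> 1" "n \<ge> 1"
    and indep: "indep_vars (\<lambda>_. borel) (\<lambda>(t, i, j). xi t i j) (UNIV \<times> {..<lam} \<times> {..<n})"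
    and "\<And>t i j. i < lam \<Longrightarrow> j < n \<Longrightarrow> distributed M lborel (xi t i j) std_normal_density"
  shows "std_normal_array M lam n (xi t)"
proof
  have "indep_vars (\<lambda>_. borel) (\<lambda>p. (\<lambda>(t, i, j). xi t i j) ((\<lambda>(i, j). (t, i, j)) p)) ({..<lam} \<times> {..<n})"
    by (rule indep_vars_reindex[OF indep]) (auto simp: inj_on_def)
  then show "indep_vars (\<lambda>_. borel) (\<lambda>(i, j). xi t i j) ({..<lam} \<times> {..<n})"
    by (simp add: split_beta')
qed (use assms in auto)

theorem (in prob_space) log_step_size_increments:
  fixes xi :: "nat \<Rightarrow> nat \<Rightarrow> nat \<Rightarrow> 'a \<Rightarrow> real" and d :: real
  assumes lam: "lam \<ge> 1" and n: "n \<ge> 1" and d: "d > 0"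
    and indep: "indep_vars (\<lambda>_. borel) (\<lambda>(t, i, j). xi t i j) (UNIV \<times> {..<lam} \<times> {..<n})"
    and normal: "\<And>t i j. i < lam \<Longrightarrow> j < n \<Longrightarrow> distributed M lborel (xi t i j) std_normal_density"
  defines "Z \<equiv> \<lambda>t \<omega>. (selected_sqnorm lam n (\<lambda>i j. xi t i j \<omega>) / real n - 1) / (2 * d)"
    and "\<Delta> \<equiv> (min_normal_second_moment lam - 1) / (2 * d * real n)"
  shows "integrable M (Z t)" and "expectation (Z t) = \<Delta>"
    and "AE \<omega> in M. (\<lambda>T. (\<Sum>t<T. Z t \<omega>) / real T) \<longlonglongrightarrow> \<Delta>"
proof -
  let ?J = "{..<lam} \<times> {..<n}"
  note block = std_normal_array_iteration[OF lam n indep normal]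
  have Z_affine: "Z t = (\<lambda>\<omega>. 1 / (2 * d * real n) * selected_sqnorm lam n (\<lambda>i j. xi t i j \<omega>) + - 1 / (2 * d))" for t
    using d n by (auto simp: Z_def field_simps)
  note sqnorm = std_normal_array.expectation_selected_sqnorm[OF block]
    and sqnorm4 = std_normal_array.fourth_moment_selected_sqnorm[OF block]
  have [measurable]: "(\<lambda>\<omega>. selected_sqnorm lam n (\<lambda>i j. xi t i j \<omega>)) \<in> borel_measurable M" for t
    using sqnorm(1) by auto
  show int: "integrable M (Z t)" for t unfolding Z_def using sqnorm(1) by simp
  show mean: "expectation (Z t) = \<Delta>" for t
    unfolding Z_def \<Delta>_def using sqnorm d n prob_space by (simp add: field_simps)
  have "indep_vars (\<lambda>_. borel) (\<lambda>t \<omega>. (\<lambda>v. (selected_sqnorm lam n (\<lambda>i j. v (i, j)) / real n - 1) / (2 * d))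
      (\<lambda>p\<in>?J. (\<lambda>(t, i, j). xi t i j) ((\<lambda>(i, j). (t, i, j)) p) \<omega>)) UNIV"
  proof (rule indep_vars_blocks[OF indep])
    show "(\<lambda>v. (selected_sqnorm lam n (\<lambda>i j. v (i, j)) / real n - 1) / (2 * d)) \<in> borel_measurable (PiM ?J (\<lambda>_. borel))"
      using lam n by (intro borel_measurable_divide borel_measurable_diff borel_measurable_selected_sqnorm
          measurable_component_singleton) auto
  qed (auto simp: disjoint_family_on_def)
  moreover have "selected_sqnorm lam n (\<lambda>i j. (\<lambda>p\<in>?J. (\<lambda>(t, i, j). xi t i j) ((\<lambda>(i, j). (t, i, j)) p) \<omega>) (i, j))
      = selected_sqnorm lam n (\<lambda>i j. xi t i j \<omega>)" for t \<omega>
    using lam n by (intro selected_sqnorm_cong) auto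
  ultimately have "indep_vars (\<lambda>_. borel) Z UNIV" by (simp add: Z_def)
  moreover note fourth_moment_affine[OF _ sqnorm4, of _ "1 / (2 * d * real n)" "- 1 / (2 * d)"]
  ultimately show "AE \<omega> in M. (\<lambda>T. (\<Sum>t<T. Z t \<omega>) / real T) \<longlonglongrightarrow> \<Delta>"
    using mean unfolding Z_affine by (intro strong_law_fourth_moment) auto
qed

theorem proposition1:
  fixes M :: "'a measure" and n lam :: nat and d s0 :: real
    and X0 :: "nat \<Rightarrow> real"
    and p0 :: "nat \<Rightarrow> 'a \<Rightarrow> real" and xi :: "nat \<Rightarrow> nat \<Rightarrow> nat \<Rightarrow> 'a \<Rightarrow> real"
  defines "W \<equiv> (\<lambda>k. case k of Inl j \<Rightarrow> p0 j | Inr (t, i, j) \<Rightarrow> xi t i j)"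
  defines "I \<equiv> Inl ` {..<n} \<union> {Inr (t, i, j) | t i j. i < lam \<and> j < n}"
  defines "sg \<equiv> (\<lambda>t \<omega>. fst (snd (csa_es n lam 1 d (\<lambda>x. x 0) X0 s0
                         (\<lambda>j. p0 j \<omega>) (\<lambda>t i j. xi t i j \<omega>) t)))"
  defines "Delta \<equiv> (min_normal_second_moment lam - 1) / (2 * d * real n)"
  assumes "prob_space M"
    and "n \<ge> 1" and "lam \<ge> 1" and "d > 0" and "s0 > 0"
    and "prob_space.indep_vars M (\<lambda>_. borel) W I"
    and "\<And>k. k \<in> I \<Longrightarrow> distributed M lborel (W k) std_normal_density"
  shows "(AE \<omega> in M. (\<lambda>t. ln (sg t \<omega> / s0) / real t) \<longlonglongrightarrow> Delta)
       \<and> (\<forall>t. integrable M (\<lambda>\<omega>. ln (sg (Suc t) \<omega> / sg t \<omega>))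
              \<and> integral\<^sup>L M (\<lambda>\<omega>. ln (sg (Suc t) \<omega> / sg t \<omega>)) = Delta)"
proof -
  interpret prob_space M by fact
  define Z where "Z t \<omega> = (selected_sqnorm lam n (\<lambda>i j. xi t i j \<omega>) / real n - 1) / (2 * d)" for t \<omega>
  have sg: "sg t \<omega> = s0 * exp (\<Sum>k<t. Z k \<omega>)" for t \<omega>
    unfolding sg_def Z_def by (rule csa_es_step_size_without_cumulation[OF \<open>s0 > 0\<close>])
  have "indep_vars (\<lambda>_. borel) (\<lambda>p. W (Inr p)) (UNIV \<times> {..<lam} \<times> {..<n})"
    by (rule indep_vars_reindex[OF \<open>indep_vars (\<lambda>_. borel) W I\<close>]) (auto simp: I_def)
  then have noise: "indep_vars (\<lambda>_. borel) (\<lambda>(t, i, j). xi t i j) (UNIV \<times> {..<lam} \<times> {..<n})"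
    by (simp add: W_def split_beta')
  have "distributed M lborel (xi t i j) std_normal_density" if "i < lam" "j < n" for t i j
    using assms(11)[of "Inr (t, i, j)"] that by (simp add: I_def W_def)
  note increments = log_step_size_increments[OF assms(7,6,8) noise this, folded Z_def Delta_def]
  show ?thesis
    using increments \<open>s0 > 0\<close> by (simp add: sg exp_diff[symmetric] field_simps)
qed

end
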